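(* Let $\Delta \subseteq N_\mathbb{R}$ be a reflexive polytope (of any dimension $d$) and let $\Sigma$ be a $\Delta$-maximal fan. Then: (1) every cone of $\Sigma$ of dimension at most $3$ is unimodular; in particular the toric variety $X(\Sigma)$ has singular locus of codimension $\geq 4$; (2) every $4$-dimensional cone of $\Sigma$ that is not contained in a maximal cone of $\Sigma(\Delta)$ is unimodular; in particular the toric variety $X(\Sigma^{[4]})$ is Gorenstein.
   Context: $N \cong \mathbb{Z}^d$ is a lattice, $M = \mathrm{Hom}(N,\mathbb{Z})$ its dual, $N_\mathbb{R} = N\otimes\mathbb{R}$, $M_\mathbb{R}=M\otimes \mathbb{R}$, and $\langle\,,\rangle$ the natural pairing. A lattice polytope $\Delta\subseteq N_\mathbb{R}$ with the origin in its interior is reflexive if $\Delta^* = \{m\in M_\mathbb{R} : \langle m,n\rangle \ge -1 \text{ for all } n\in\Delta\}$ is a lattice polytope. $\Sigma(\Delta)$ denotes the fan of cones over the proper faces of $\Delta$. A fan $\Sigma$ in $N_\mathbb{R}$ is $\Delta$-maximal if (1) its set of rays equals the set of rays through the nonzero lattice points of $\Delta$, and (2) $\Sigma$ is complete and simplicial (it need not subdivide $\Sigma(\Delta)$ nor be projective). A cone is unimodular if it is spanned by part of a lattice basis of $N$. $X(\Sigma)$ denotes the toric variety of a fan $\Sigma$, and $\Sigma^{[n]}$ the subfan of cones of dimension at most $n$. *)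

theory Defs
  imports "HOL-Analysis.Analysis"
begin

text \<open>The lattice N is the integer points of real^'n; M is identified with N via the
  standard inner product.\<close>

definition lattice_pt :: "real^'n \<Rightarrow> bool" where
  "lattice_pt x \<longleftrightarrow> (\<forall>i. x $ i \<in> \<int>)"

definition lattice_polytope :: "(real^'n) set \<Rightarrow> bool" where
  "lattice_polytope P \<longleftrightarrow>
     (\<exists>S. finite S \<and> (\<forall>x\<in>S. lattice_pt x) \<and> P = convex hull S)"

definition dual_polytope :: "(real^'n) set \<Rightarrow> (real^'n) set" where
  "dual_polytope P = {m. \<forall>n\<in>P. m \<bullet> n \<ge> -1}"

definition reflexive_polytope :: "(real^'n) set \<Rightarrow> bool" where
  "reflexive_polytope P \<longleftrightarrow>
     lattice_polytope P \<and> 0 \<in> interior P \<and> lattice_polytope (dual_polytope P)"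

definition cone_gen :: "(real^'n) set \<Rightarrow> (real^'n) set" where
  "cone_gen S = {y. \<exists>c. (\<forall>v\<in>S. c v \<ge> 0) \<and> y = (\<Sum>v\<in>S. c v *\<^sub>R v)}"

definition polyhedral_cone :: "(real^'n) set \<Rightarrow> bool" where
  "polyhedral_cone \<sigma> \<longleftrightarrow> (\<exists>S. finite S \<and> \<sigma> = cone_gen S)"

definition is_fan :: "(real^'n) set set \<Rightarrow> bool" where
  "is_fan \<Sigma> \<longleftrightarrow> finite \<Sigma> \<and>
     (\<forall>\<sigma>\<in>\<Sigma>. polyhedral_cone \<sigma> \<and> \<sigma> \<inter> uminus ` \<sigma> = {0}) \<and>
     (\<forall>\<sigma>\<in>\<Sigma>. \<forall>\<tau>. \<tau> face_of \<sigma> \<and> \<tau> \<noteq> {} \<longrightarrow> \<tau> \<in> \<Sigma>) \<and>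
     (\<forall>\<sigma>\<in>\<Sigma>. \<forall>\<tau>\<in>\<Sigma>. (\<sigma> \<inter> \<tau>) face_of \<sigma> \<and> (\<sigma> \<inter> \<tau>) face_of \<tau>)"

definition complete_fan :: "(real^'n) set set \<Rightarrow> bool" where
  "complete_fan \<Sigma> \<longleftrightarrow> \<Union>\<Sigma> = UNIV"

definition simplicial_fan :: "(real^'n) set set \<Rightarrow> bool" where
  "simplicial_fan \<Sigma> \<longleftrightarrow>
     (\<forall>\<sigma>\<in>\<Sigma>. \<exists>S. finite S \<and> independent S \<and> \<sigma> = cone_gen S)"

definition fan_rays :: "(real^'n) set set \<Rightarrow> (real^'n) set set" where
  "fan_rays \<Sigma> = {\<rho>\<in>\<Sigma>. dim \<rho> = 1}"

definition Delta_maximal :: "(real^'n) set \<Rightarrow> (real^'n) set set \<Rightarrow> bool" where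
  "Delta_maximal \<Delta> \<Sigma> \<longleftrightarrow> is_fan \<Sigma> \<and>
     fan_rays \<Sigma> = {cone_gen {p} | p. p \<in> \<Delta> \<and> lattice_pt p \<and> p \<noteq> 0} \<and>
     complete_fan \<Sigma> \<and> simplicial_fan \<Sigma>"

definition int_span :: "(real^'n) set \<Rightarrow> (real^'n) set" where
  "int_span E = {y. \<exists>c. (\<forall>v\<in>E. c v \<in> \<int>) \<and> y = (\<Sum>v\<in>E. c v *\<^sub>R v)}"

definition lattice_basis :: "(real^'n) set \<Rightarrow> bool" where
  "lattice_basis E \<longleftrightarrow> finite E \<and> independent E \<and> int_span E = {x. lattice_pt x}"

definition unimodular_cone :: "(real^'n) set \<Rightarrow> bool" where
  "unimodular_cone \<sigma> \<longleftrightarrow> (\<exists>B E. lattice_basis E \<and> B \<subseteq> E \<and> \<sigma> = cone_gen B)"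

definition cone_over :: "(real^'n) set \<Rightarrow> (real^'n) set" where
  "cone_over F = {t *\<^sub>R x | t x. 0 \<le> t \<and> x \<in> F}"

definition maximal_cones_of_face_fan :: "(real^'n) set \<Rightarrow> (real^'n) set set" where
  "maximal_cones_of_face_fan \<Delta> = {cone_over F | F. F facet_of \<Delta>}"

end

theory Submission
  imports Defs
begin

text \<open>
  Let \<sigma> be a cone of the \<Delta>-maximal fan \<Sigma> and let \<open>w\<^sub>i\<close> be the first lattice points on its
  rays; they lie in \<Delta>. A lattice point \<open>z = \<Sum> b\<^sub>i w\<^sub>i\<close> with \<open>0 \<le> b\<^sub>i < 1\<close>, not all zero, is
  never in \<Delta>: its ray would be a ray of \<Sigma>, hence of \<sigma>, contradicting primitivity. On the
  other hand every vertex m of the dual polytope satisfies \<open>\<langle>m, w\<^sub>i\<rangle> \<ge> -1\<close>, so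
  \<open>\<langle>m, z\<rangle> \<ge> -\<Sum> b\<^sub>i\<close>; if \<open>\<Sum> b\<^sub>i < 2\<close> integrality gives \<open>\<langle>m, z\<rangle> \<ge> -1\<close> and z \<in> \<Delta>.
  Applying both facts to the fractional part \<open>\<Sum> b\<^sub>i w\<^sub>i\<close> of a lattice point of \<open>span \<sigma>\<close>
  and to its reflection \<open>\<Sum> (1 - b\<^sub>i) w\<^sub>i\<close> (sum over the i with \<open>b\<^sub>i > 0\<close>) gives two
  coefficient sums \<open>\<ge> 2\<close> adding up to at most \<open>dim \<sigma>\<close>. So for \<open>dim \<sigma> \<le> 3\<close> the fractional part vanishes, and for \<open>dim \<sigma> = 4\<close> equality
  produces a vertex m with \<open>\<langle>m, w\<^sub>i\<rangle> = -1\<close> for all i, i.e. \<sigma> lies in the cone over a facet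
  of \<Delta>. Thus the \<open>w\<^sub>i\<close> span a saturated sublattice of N, and such a set extends to a
  lattice basis.
\<close>

lemma lattice_pt_zero [simp]: "lattice_pt 0"
  by (simp add: lattice_pt_def)

lemma lattice_pt_add: "lattice_pt x \<Longrightarrow> lattice_pt y \<Longrightarrow> lattice_pt (x + y)"
  by (simp add: lattice_pt_def)

lemma lattice_pt_diff: "lattice_pt x \<Longrightarrow> lattice_pt y \<Longrightarrow> lattice_pt (x - y)"
  by (simp add: lattice_pt_def)

lemma lattice_pt_scaleR: "c \<in> \<int> \<Longrightarrow> lattice_pt x \<Longrightarrow> lattice_pt (c *\<^sub>R x)"
  by (simp add: lattice_pt_def)

lemma lattice_pt_sum:
  "(\<And>v. v \<in> S \<Longrightarrow> c v \<in> \<int> \<and> lattice_pt (u v)) \<Longrightarrow> lattice_pt (\<Sum>v\<in>S. c v *\<^sub>R u v)"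
  by (induction S rule: infinite_finite_induct) (auto intro: lattice_pt_add lattice_pt_scaleR)

lemma lattice_pt_Basis: "b \<in> Basis \<Longrightarrow> lattice_pt b"
  by (auto simp: Basis_vec_def lattice_pt_def axis_def)

lemma inner_lattice_pt_Ints: "lattice_pt m \<Longrightarrow> lattice_pt y \<Longrightarrow> m \<bullet> y \<in> \<int>"
  unfolding inner_vec_def lattice_pt_def by (auto intro!: Ints_mult)

lemma lattice_pt_int_span: "(\<And>w. w \<in> W \<Longrightarrow> lattice_pt w) \<Longrightarrow> x \<in> int_span W \<Longrightarrow> lattice_pt x"
  unfolding int_span_def by (auto intro!: lattice_pt_sum)

lemma Ints_gt_minus_2_imp_ge_minus_1: "(x::real) \<in> \<int> \<Longrightarrow> -2 < x \<Longrightarrow> -1 \<le> x"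
proof (elim Ints_cases)
  fix z assume "x = of_int z" "-2 < x"
  hence "-2 < z" by simp
  thus "-1 \<le> x" using \<open>x = of_int z\<close> by simp
qed

lemma finite_bounded_lattice_pts: "finite {x::real^'n. lattice_pt x \<and> norm x \<le> R}"
proof -
  define A where "A = real_of_int ` {-\<lceil>R\<rceil>..\<lceil>R\<rceil>}"
  have "x $ i \<in> A" if "lattice_pt x" "norm x \<le> R" for x :: "real^'n" and i
  proof -
    have "x $ i \<in> \<int>" using that(1) unfolding lattice_pt_def by blast
    then obtain k where k: "x $ i = of_int k" by (rule Ints_cases)
    have "\<bar>x $ i\<bar> \<le> R" using component_le_norm_cart[of x i] that(2) by linarith
    hence "\<bar>k\<bar> \<le> \<lceil>R\<rceil>" using k by (metis ceiling_mono ceiling_of_int of_int_abs)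
    hence "k \<in> {-\<lceil>R\<rceil>..\<lceil>R\<rceil>}" by auto
    thus ?thesis unfolding A_def using k by blast
  qed
  hence "{x::real^'n. lattice_pt x \<and> norm x \<le> R} \<subseteq> (\<lambda>f. \<chi> i. f i) ` (Pi\<^sub>E UNIV (\<lambda>_. A))"
    by (auto intro!: image_eqI[where x = "\<lambda>i. _ $ i"] simp: PiE_UNIV_domain)
  moreover have "finite (Pi\<^sub>E (UNIV::'n set) (\<lambda>_. A))"
    by (intro finite_PiE) (auto simp: A_def)
  ultimately show ?thesis by (meson finite_imageI finite_subset)
qed

section \<open>Saturated sets of lattice vectors\<close>

definition lattice_saturated :: "(real^'n) set \<Rightarrow> bool" where
  "lattice_saturated W \<longleftrightarrow> (\<forall>x. lattice_pt x \<and> x \<in> span W \<longrightarrow> x \<in> int_span W)"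

lemma int_span_insert:
  assumes "finite W" "a \<notin> W" "z \<in> int_span W" "n \<in> \<int>"
  shows "z + n *\<^sub>R a \<in> int_span (insert a W)"
proof -
  obtain c where c: "\<forall>v\<in>W. c v \<in> \<int>" "z = (\<Sum>v\<in>W. c v *\<^sub>R v)"
    using assms(3) unfolding int_span_def by auto
  define c' where "c' = c(a := n)"
  have "(\<Sum>v\<in>insert a W. c' v *\<^sub>R v) = n *\<^sub>R a + (\<Sum>v\<in>W. c v *\<^sub>R v)"
    using assms(1,2) by (simp add: c'_def sum.insert) (intro sum.cong; auto)
  moreover have "\<forall>v\<in>insert a W. c' v \<in> \<int>" using c assms(4) by (auto simp: c'_def)
  ultimately show ?thesis unfolding int_span_def using c by (auto simp: add.commute)
qed

lemma finite_lattice_offsets: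
  fixes W :: "(real^'n) set"
  assumes finW: "finite W" and latW: "\<forall>w\<in>W. lattice_pt w" and e: "e \<notin> span W"
  shows "finite {t. 0 < t \<and> t \<le> 1 \<and> (\<exists>x. lattice_pt x \<and> x - t *\<^sub>R e \<in> span W)}"
    (is "finite ?T")
proof -
  have offset_unique: "t = t'" if "x - t *\<^sub>R e \<in> span W" "x - t' *\<^sub>R e \<in> span W" for x t t'
  proof (rule ccontr)
    assume "t \<noteq> t'"
    have "(x - t *\<^sub>R e) - (x - t' *\<^sub>R e) \<in> span W" using that span_diff by blast
    hence "(t' - t) *\<^sub>R e \<in> span W" by (simp add: algebra_simps)
    hence "(1 / (t' - t)) *\<^sub>R ((t' - t) *\<^sub>R e) \<in> span W" by (rule span_scale)
    thus False using \<open>t \<noteq> t'\<close> e by simp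
  qed
  define offset where "offset x = (THE t. x - t *\<^sub>R e \<in> span W)" for x
  have offset: "offset x = t" if "x - t *\<^sub>R e \<in> span W" for x t
    unfolding offset_def using that offset_unique by blast
  define R where "R = norm e + (\<Sum>w\<in>W. norm w)"
  \<comment> \<open>Reducing the coefficients along W modulo 1 keeps the offset and bounds the lattice point.\<close>
  have "?T \<subseteq> offset ` {x. lattice_pt x \<and> norm x \<le> R}"
  proof
    fix t assume "t \<in> ?T"
    then obtain x where x: "lattice_pt x" "x - t *\<^sub>R e \<in> span W" "0 < t" "t \<le> 1" by auto
    obtain a where a: "x - t *\<^sub>R e = (\<Sum>w\<in>W. a w *\<^sub>R w)"
      using span_finite[OF finW] x(2) by auto
    define frac where "frac w = a w - of_int \<lfloor>a w\<rfloor>" for w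
    define x' where "x' = x - (\<Sum>w\<in>W. of_int \<lfloor>a w\<rfloor> *\<^sub>R w)"
    have lx': "lattice_pt x'"
      unfolding x'_def using x(1) latW by (intro lattice_pt_diff lattice_pt_sum) auto
    have x'_eq: "x' = t *\<^sub>R e + (\<Sum>w\<in>W. frac w *\<^sub>R w)"
      unfolding x'_def frac_def using a
      by (simp add: scaleR_diff_left sum_subtractf algebra_simps)
    have "x' - t *\<^sub>R e \<in> span W"
      unfolding x'_eq by (simp add: span_sum span_scale span_base)
    hence "offset x' = t" by (rule offset)
    have "norm (\<Sum>w\<in>W. frac w *\<^sub>R w) \<le> (\<Sum>w\<in>W. norm (frac w *\<^sub>R w))"
      by (rule norm_sum)
    also have "\<dots> \<le> (\<Sum>w\<in>W. norm w)"
    proof (rule sum_mono)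
      fix w
      have "0 \<le> frac w" "frac w \<le> 1" unfolding frac_def by linarith+
      thus "norm (frac w *\<^sub>R w) \<le> norm w" by (simp add: mult_left_le_one_le)
    qed
    finally have "norm x' \<le> R"
      using norm_triangle_ineq[of "t *\<^sub>R e" "\<Sum>w\<in>W. frac w *\<^sub>R w"] x(3,4)
        mult_left_le_one_le[of "norm e" t]
      unfolding x'_eq R_def by simp
    thus "t \<in> offset ` {x. lattice_pt x \<and> norm x \<le> R}" using lx' \<open>offset x' = t\<close> by blast
  qed
  thus ?thesis using finite_bounded_lattice_pts finite_surj by blast
qed

lemma lattice_saturated_insert:
  fixes W :: "(real^'n) set"
  assumes indW: "independent W" and latW: "\<forall>w\<in>W. lattice_pt w" and satW: "lattice_saturated W"
    and e: "lattice_pt e" "e \<notin> span W"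
  obtains x0 where "lattice_pt x0" "x0 \<notin> span W" "lattice_saturated (insert x0 W)"
proof -
  have finW: "finite W" using indW independent_bound by blast
  define T where "T = {t. 0 < t \<and> t \<le> 1 \<and> (\<exists>x. lattice_pt x \<and> x - t *\<^sub>R e \<in> span W)}"
  have "1 \<in> T" unfolding T_def using e by (auto intro!: exI[of _ e] span_zero)
  moreover have "finite T" unfolding T_def using finite_lattice_offsets finW latW e(2) by blast
  ultimately have t0T: "Min T \<in> T" and t0_min: "\<And>t. t \<in> T \<Longrightarrow> Min T \<le> t"
    by (auto intro: Min_in)
  define t0 where "t0 = Min T"
  obtain x0 where x0: "lattice_pt x0" "x0 - t0 *\<^sub>R e \<in> span W" "0 < t0" "t0 \<le> 1"
    using t0T unfolding T_def t0_def by auto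
  have x0W: "x0 \<notin> span W"
  proof
    assume "x0 \<in> span W"
    hence "x0 - (x0 - t0 *\<^sub>R e) \<in> span W" using x0(2) by (rule span_diff)
    hence "(1 / t0) *\<^sub>R (t0 *\<^sub>R e) \<in> span W" by (simp add: span_scale del: scaleR_scaleR)
    thus False using x0(3) e(2) by simp
  qed
  have "x \<in> int_span (insert x0 W)" if lx: "lattice_pt x" and "x \<in> span (insert x0 W)" for x
  proof -
    obtain k where k: "x - k *\<^sub>R x0 \<in> span W" using \<open>x \<in> span _\<close> span_breakdown_eq by blast
    define r where "r = k - of_int \<lfloor>k\<rfloor>"
    define z where "z = x - of_int \<lfloor>k\<rfloor> *\<^sub>R x0"
    have lz: "lattice_pt z" unfolding z_def using lx x0(1) by (intro lattice_pt_diff lattice_pt_scaleR) auto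
    have zr: "z - r *\<^sub>R x0 \<in> span W" using k unfolding z_def r_def by (simp add: algebra_simps)
    \<comment> \<open>A fractional r > 0 would give the offset r * t0 < t0.\<close>
    have "r = 0"
    proof (rule ccontr)
      assume "r \<noteq> 0"
      hence r: "0 < r" "r < 1" unfolding r_def by linarith+
      have "(z - r *\<^sub>R x0) + r *\<^sub>R (x0 - t0 *\<^sub>R e) \<in> span W"
        using zr x0(2) by (intro span_add span_scale)
      hence "z - (r * t0) *\<^sub>R e \<in> span W" by (simp add: algebra_simps)
      moreover have "r * t0 \<le> 1" using r x0(3,4) by (simp add: mult_le_one)
      ultimately have "r * t0 \<in> T" unfolding T_def using lz r x0(3) by auto
      thus False using t0_min r x0(3) unfolding t0_def by fastforce
    qed
    hence "z \<in> int_span W" using satW lz zr unfolding lattice_saturated_def by simp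
    hence "z + of_int \<lfloor>k\<rfloor> *\<^sub>R x0 \<in> int_span (insert x0 W)"
      using finW x0W span_base by (intro int_span_insert) auto
    thus ?thesis unfolding z_def by simp
  qed
  thus thesis using that x0 x0W unfolding lattice_saturated_def by blast
qed

lemma lattice_saturated_imp_subset_lattice_basis:
  fixes W :: "(real^'n) set"
  assumes "independent W" "\<forall>w\<in>W. lattice_pt w" "lattice_saturated W"
  shows "\<exists>E. lattice_basis E \<and> W \<subseteq> E"
  using assms
proof (induction "CARD('n) - card W" arbitrary: W rule: less_induct)
  case less
  have finW: "finite W" using independent_bound[OF less.prems(1)] by blast
  show ?case
  proof (cases "\<forall>x. lattice_pt x \<longrightarrow> x \<in> span W")
    case True
    hence "span Basis \<subseteq> span W" using lattice_pt_Basis by (intro span_minimal) auto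
    hence "int_span W = {x. lattice_pt x}"
      using less.prems lattice_pt_int_span[of W] unfolding lattice_saturated_def by auto
    thus ?thesis using finW less.prems(1) unfolding lattice_basis_def by auto
  next
    case False
    then obtain e where "lattice_pt e" "e \<notin> span W" by auto
    then obtain x0 where x0: "lattice_pt x0" "x0 \<notin> span W" "lattice_saturated (insert x0 W)"
      using lattice_saturated_insert less.prems by blast
    have ind: "independent (insert x0 W)" using x0(2) less.prems(1) by (rule independent_insertI)
    have "x0 \<notin> W" using x0(2) span_base by blast
    hence "card (insert x0 W) = Suc (card W)" using finW by simp
    moreover have "card (insert x0 W) \<le> CARD('n)" using independent_bound[OF ind] by simp
    ultimately have "CARD('n) - card (insert x0 W) < CARD('n) - card W" by simp
    thus ?thesis using less.hyps[OF _ ind _ x0(3)] less.prems(2) x0(1) by blast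
  qed
qed

section \<open>Finitely generated cones\<close>

lemma independent_coeffs_eq:
  fixes W :: "(real^'n) set"
  assumes "independent W" "(\<Sum>w\<in>W. a w *\<^sub>R w) = (\<Sum>w\<in>W. b w *\<^sub>R w)" "w \<in> W"
  shows "a w = b w"
proof -
  have "(\<Sum>w\<in>W. (a w - b w) *\<^sub>R w) = 0"
    using assms(2) by (simp add: scaleR_diff_left sum_subtractf)
  thus ?thesis using assms(1,3) independent_explicit[of W] by auto
qed

lemma sum_single_coeff_scaleR:
  fixes S :: "'a::real_vector set"
  shows "finite S \<Longrightarrow> s \<in> S \<Longrightarrow> (\<Sum>v\<in>S. (if v = s then c else 0) *\<^sub>R v) = c *\<^sub>R s"
  by (simp add: if_distrib[of "\<lambda>c. c *\<^sub>R _"] cong: if_cong)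

lemma cone_gen_singleton: "cone_gen {p} = {c *\<^sub>R p | c. 0 \<le> c}"
  unfolding cone_gen_def by (auto intro: exI[of _ "\<lambda>_. c" for c])

lemma cone_gen_scaleR:
  assumes "y \<in> cone_gen S" "0 \<le> t"
  shows "t *\<^sub>R y \<in> cone_gen S"
proof -
  obtain c where c: "\<forall>v\<in>S. 0 \<le> c v" "y = (\<Sum>v\<in>S. c v *\<^sub>R v)"
    using assms(1) unfolding cone_gen_def by auto
  have "t *\<^sub>R y = (\<Sum>v\<in>S. (t * c v) *\<^sub>R v)" using c by (simp add: scaleR_sum_right)
  thus ?thesis unfolding cone_gen_def using c assms(2) by (auto intro!: exI[of _ "\<lambda>v. t * c v"])
qed

lemma cone_gen_add:
  assumes "x \<in> cone_gen S" "y \<in> cone_gen S"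
  shows "x + y \<in> cone_gen S"
proof -
  obtain c where c: "\<forall>v\<in>S. 0 \<le> c v" "x = (\<Sum>v\<in>S. c v *\<^sub>R v)"
    using assms(1) unfolding cone_gen_def by auto
  obtain d where d: "\<forall>v\<in>S. 0 \<le> d v" "y = (\<Sum>v\<in>S. d v *\<^sub>R v)"
    using assms(2) unfolding cone_gen_def by auto
  have "x + y = (\<Sum>v\<in>S. (c v + d v) *\<^sub>R v)" using c d by (simp add: scaleR_add_left sum.distrib)
  thus ?thesis unfolding cone_gen_def using c d by (auto intro!: exI[of _ "\<lambda>v. c v + d v"])
qed

lemma generator_in_cone_gen: "finite S \<Longrightarrow> s \<in> S \<Longrightarrow> s \<in> cone_gen S"
  unfolding cone_gen_def
  by (auto intro!: exI[of _ "\<lambda>v. if v = s then 1 else 0"] simp: sum_single_coeff_scaleR)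

lemma cone_gen_subset:
  assumes "finite T" "T \<subseteq> cone_gen S"
  shows "cone_gen T \<subseteq> cone_gen S"
proof
  fix y assume "y \<in> cone_gen T"
  then obtain c where c: "\<forall>v\<in>T. 0 \<le> c v" "y = (\<Sum>v\<in>T. c v *\<^sub>R v)"
    unfolding cone_gen_def by auto
  have "(\<Sum>v\<in>F. c v *\<^sub>R v) \<in> cone_gen S" if "F \<subseteq> T" for F
    using finite_subset[OF that assms(1)] that
  proof (induction F rule: finite_induct)
    case empty
    show ?case unfolding cone_gen_def by (auto intro!: exI[of _ "\<lambda>_. 0"])
  next
    case (insert v F)
    thus ?case using assms(2) c(1) by (auto intro!: cone_gen_add cone_gen_scaleR)
  qed
  thus "y \<in> cone_gen S" using c(2) by blast
qed

lemma cone_gen_rescale: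
  assumes "finite S" "\<forall>s\<in>S. 0 < k s"
  shows "cone_gen ((\<lambda>s. k s *\<^sub>R s) ` S) = cone_gen S"
proof
  show "cone_gen ((\<lambda>s. k s *\<^sub>R s) ` S) \<subseteq> cone_gen S"
    using assms by (intro cone_gen_subset image_subsetI cone_gen_scaleR generator_in_cone_gen)
      (auto simp: less_imp_le)
  have "s \<in> cone_gen ((\<lambda>s. k s *\<^sub>R s) ` S)" if "s \<in> S" for s
  proof -
    have "(1 / k s) *\<^sub>R (k s *\<^sub>R s) \<in> cone_gen ((\<lambda>s. k s *\<^sub>R s) ` S)"
      using assms that by (intro cone_gen_scaleR generator_in_cone_gen) auto
    moreover have "k s \<noteq> 0" using assms that by auto
    ultimately show ?thesis by simp
  qed
  thus "cone_gen S \<subseteq> cone_gen ((\<lambda>s. k s *\<^sub>R s) ` S)" using assms by (intro cone_gen_subset) auto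
qed

lemma cone_gen_subset_span: "cone_gen S \<subseteq> span S"
proof
  fix y assume "y \<in> cone_gen S"
  then obtain c where "y = (\<Sum>v\<in>S. c v *\<^sub>R v)" unfolding cone_gen_def by auto
  thus "y \<in> span S" by (simp add: span_sum span_scale span_base)
qed

lemma span_cone_gen:
  assumes "finite S"
  shows "span (cone_gen S) = span S"
proof (intro subset_antisym span_minimal)
  show "S \<subseteq> span (cone_gen S)" using generator_in_cone_gen[OF assms] span_base by blast
qed (auto simp: cone_gen_subset_span)

lemma dim_cone_gen:
  assumes "finite S" "independent S"
  shows "dim (cone_gen S) = card S"
proof -
  have "dim (cone_gen S) = dim (span (cone_gen S))" by (rule dim_span[symmetric])
  also have "\<dots> = dim S" by (simp add: span_cone_gen[OF assms(1)] dim_span)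
  finally show ?thesis using dim_eq_card_independent[OF assms(2)] by simp
qed

lemma independent_rescale:
  fixes S :: "(real^'n) set"
  assumes indS: "independent S" and k: "\<forall>s\<in>S. k s \<noteq> 0"
  shows "independent ((\<lambda>s. k s *\<^sub>R s) ` S)"
proof -
  let ?W = "(\<lambda>s. k s *\<^sub>R s) ` S"
  have finS: "finite S" using indS independent_bound by blast
  have "s \<in> span ?W" if "s \<in> S" for s
    using span_scale[OF span_base[of "k s *\<^sub>R s" ?W], of "1 / k s"] that k by auto
  hence span_eq: "span ?W = span S"
    by (intro subset_antisym span_minimal) (auto intro: span_scale span_base)
  have card_S: "dim (span S) = card S" by (simp add: dim_span dim_eq_card_independent[OF indS])
  show ?thesis
    by (rule card_le_dim_spanning[of ?W "span S"])
       (use span_eq card_S finS card_image_le[OF finS] span_superset in \<open>auto intro: span_scale span_base\<close>)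
qed

lemma cone_gen_singleton_face_of:
  fixes S :: "(real^'n) set"
  assumes indS: "independent S" and s: "s \<in> S"
  shows "cone_gen {s} face_of cone_gen S"
  unfolding face_of_def
proof (intro conjI ballI impI)
  have finS: "finite S" using indS independent_bound by blast
  show "cone_gen {s} \<subseteq> cone_gen S"
    using cone_gen_scaleR[OF generator_in_cone_gen[OF finS s]] by (auto simp: cone_gen_singleton)
  show "convex (cone_gen {s})" unfolding cone_gen_singleton convex_def
    by clarsimp (metis add_nonneg_nonneg mult_nonneg_nonneg scaleR_add_left scaleR_scaleR)
  have on_ray: "(\<Sum>v\<in>S. \<gamma> v *\<^sub>R v) \<in> cone_gen {s}"
    if "\<forall>v\<in>S. 0 \<le> \<gamma> v" "\<forall>v\<in>S. v \<noteq> s \<longrightarrow> \<gamma> v = 0" for \<gamma>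
  proof -
    have "(\<Sum>v\<in>S. \<gamma> v *\<^sub>R v) = (\<Sum>v\<in>S. (if v = s then \<gamma> s else 0) *\<^sub>R v)"
      using that by (intro sum.cong) auto
    thus ?thesis using that s finS by (auto simp: sum_single_coeff_scaleR cone_gen_singleton)
  qed
  fix a b x assume a: "a \<in> cone_gen S" and b: "b \<in> cone_gen S" and x: "x \<in> cone_gen {s}"
    and xab: "x \<in> open_segment a b"
  obtain \<alpha> where \<alpha>: "\<forall>v\<in>S. 0 \<le> \<alpha> v" "a = (\<Sum>v\<in>S. \<alpha> v *\<^sub>R v)"
    using a unfolding cone_gen_def by auto
  obtain \<beta> where \<beta>: "\<forall>v\<in>S. 0 \<le> \<beta> v" "b = (\<Sum>v\<in>S. \<beta> v *\<^sub>R v)"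
    using b unfolding cone_gen_def by auto
  obtain t where t: "x = t *\<^sub>R s" using x unfolding cone_gen_singleton by auto
  obtain u where u: "0 < u" "u < 1" "x = (1 - u) *\<^sub>R a + u *\<^sub>R b"
    using xab by (auto simp: in_segment)
  have "(\<Sum>v\<in>S. ((1 - u) * \<alpha> v + u * \<beta> v) *\<^sub>R v) = (\<Sum>v\<in>S. (if v = s then t else 0) *\<^sub>R v)"
    using u t \<alpha> \<beta> s finS
    by (simp add: scaleR_add_left sum.distrib scaleR_sum_right sum_single_coeff_scaleR)
  note coeffs_eq = independent_coeffs_eq[OF indS this]
  have "(1 - u) * \<alpha> v + u * \<beta> v = 0" if "v \<in> S" "v \<noteq> s" for v
    using coeffs_eq[OF that(1)] that(2) by simp
  hence "\<alpha> v = 0 \<and> \<beta> v = 0" if "v \<in> S" "v \<noteq> s" for v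
    using \<alpha>(1) \<beta>(1) u(1,2) that by (simp add: add_nonneg_eq_0_iff)
  thus "a \<in> cone_gen {s}" "b \<in> cone_gen {s}" using on_ray \<alpha> \<beta> by auto
qed

lemma ray_face_of_cone_gen_imp_generator_multiple:
  fixes W :: "(real^'n) set"
  assumes finW: "finite W" and face: "cone_gen {p} face_of cone_gen W" and "p \<noteq> 0"
  shows "\<exists>w\<in>W. \<exists>c>0. p = c *\<^sub>R w"
proof -
  have p_ray: "p \<in> cone_gen {p}" by (simp add: generator_in_cone_gen)
  hence "p \<in> cone_gen W" using face face_of_imp_subset by blast
  then obtain d where d: "\<forall>v\<in>W. 0 \<le> d v" "p = (\<Sum>v\<in>W. d v *\<^sub>R v)"
    unfolding cone_gen_def by auto
  have "\<exists>a\<in>W. d a *\<^sub>R a \<noteq> 0"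
  proof (rule ccontr)
    assume "\<not> ?thesis"
    hence "p = 0" unfolding d(2) by (simp add: sum.neutral)
    thus False using \<open>p \<noteq> 0\<close> by contradiction
  qed
  then obtain a where a: "a \<in> W" "d a *\<^sub>R a \<noteq> 0" by blast
  have da: "0 < d a" using d(1) a by force
  \<comment> \<open>p is the midpoint of a point on the ray of a and a point of the cone; the face property
    forces the former onto the ray of p.\<close>
  define q1 where "q1 = (2 * d a) *\<^sub>R a"
  define q2 where "q2 = 2 *\<^sub>R (\<Sum>v\<in>W - {a}. d v *\<^sub>R v)"
  have mid: "p = midpoint q1 q2"
    unfolding midpoint_def q1_def q2_def d(2) sum.remove[OF finW a(1)] by (simp add: algebra_simps)
  have q1: "q1 \<in> cone_gen W"
    unfolding q1_def using da finW a(1) by (intro cone_gen_scaleR generator_in_cone_gen) auto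
  have "q2 \<in> cone_gen (W - {a})"
    unfolding q2_def cone_gen_def using d(1)
    by (auto simp: scaleR_sum_right intro!: exI[of _ "\<lambda>v. 2 * d v"])
  moreover have "cone_gen (W - {a}) \<subseteq> cone_gen W"
    using finW generator_in_cone_gen[OF finW] by (intro cone_gen_subset) auto
  ultimately have q2: "q2 \<in> cone_gen W" by blast
  show ?thesis
  proof (cases "q1 = q2")
    case True
    hence "p = (2 * d a) *\<^sub>R a" using mid unfolding q1_def by simp
    thus ?thesis using a(1) da by (intro bexI[of _ a] exI[of _ "2 * d a"]) auto
  next
    case False
    hence "p \<in> open_segment q1 q2" using mid by simp
    hence "q1 \<in> cone_gen {p}" using face q1 q2 p_ray unfolding face_of_def by blast
    then obtain t where t: "0 \<le> t" "q1 = t *\<^sub>R p" unfolding cone_gen_singleton by auto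
    have "t \<noteq> 0" using t a(2) da unfolding q1_def by auto
    hence "p = (1 / t) *\<^sub>R q1" using t by simp
    hence "p = ((2 * d a) / t) *\<^sub>R a" unfolding q1_def by simp
    thus ?thesis using a(1) da t(1) \<open>t \<noteq> 0\<close> by (intro bexI[of _ a] exI[of _ "2 * d a / t"]) auto
  qed
qed

lemma cone_gen_subset_cone_over:
  fixes W :: "(real^'n) set"
  assumes "finite W" "W \<noteq> {}" "W \<subseteq> F" "convex F"
  shows "cone_gen W \<subseteq> cone_over F"
proof
  fix y assume "y \<in> cone_gen W"
  then obtain c where c: "\<forall>v\<in>W. 0 \<le> c v" "y = (\<Sum>v\<in>W. c v *\<^sub>R v)" unfolding cone_gen_def by auto
  define C where "C = (\<Sum>v\<in>W. c v)"
  show "y \<in> cone_over F"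
  proof (cases "C = 0")
    case True
    hence "\<forall>v\<in>W. c v = 0" using c(1) sum_nonneg_eq_0_iff[OF assms(1)] unfolding C_def by blast
    hence "y = 0 *\<^sub>R w" for w using c(2) by simp
    moreover obtain w where "w \<in> F" using assms(2,3) by auto
    ultimately show ?thesis unfolding cone_over_def by blast
  next
    case False
    hence C: "0 < C" using c(1) sum_nonneg unfolding C_def by (metis order_le_less)
    have "(\<Sum>v\<in>W. (c v / C) *\<^sub>R v) \<in> F"
      using assms c(1) C by (intro convex_sum) (auto simp: C_def sum_divide_distrib[symmetric])
    moreover have "y = C *\<^sub>R (\<Sum>v\<in>W. (c v / C) *\<^sub>R v)"
      using c(2) C by (simp add: scaleR_sum_right)
    ultimately show ?thesis unfolding cone_over_def using C less_imp_le by blast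
  qed
qed

section \<open>Reflexive polytopes\<close>

lemma closed_convex_bipolar:
  fixes S :: "(real^'n) set"
  assumes "closed S" "convex S" "0 \<in> S"
  shows "{y. \<forall>m\<in>dual_polytope S. -1 \<le> m \<bullet> y} = S"
proof
  show "S \<subseteq> {y. \<forall>m\<in>dual_polytope S. -1 \<le> m \<bullet> y}"
    unfolding dual_polytope_def by (auto simp: inner_commute)
  show "{y. \<forall>m\<in>dual_polytope S. -1 \<le> m \<bullet> y} \<subseteq> S"
  proof (rule subsetI, rule ccontr)
    fix y assume y: "y \<in> {y. \<forall>m\<in>dual_polytope S. -1 \<le> m \<bullet> y}" and "y \<notin> S"
    then obtain a b where ab: "a \<bullet> y < b" "\<forall>x\<in>S. b < a \<bullet> x"
      using separating_hyperplane_closed_point[OF assms(2,1)] by blast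
    have b: "b < 0" using ab(2) assms(3) by force
    have "(-1 / b) *\<^sub>R a \<in> dual_polytope S"
      unfolding dual_polytope_def
      using ab(2) b by (auto simp: field_simps less_imp_le)
    hence "-1 \<le> ((-1 / b) *\<^sub>R a) \<bullet> y" using y by blast
    moreover have "((-1 / b) *\<^sub>R a) \<bullet> y < -1" using ab(1) b by (simp add: field_simps)
    ultimately show False by simp
  qed
qed

lemma dual_constraints_convex_hull:
  fixes V :: "(real^'n) set" and y :: "real^'n"
  shows "(\<forall>m\<in>(convex hull V). -1 \<le> m \<bullet> y) \<longleftrightarrow> (\<forall>m\<in>V. -1 \<le> m \<bullet> y)"
proof
  assume "\<forall>m\<in>V. -1 \<le> m \<bullet> y"
  hence "V \<subseteq> {m. -1 \<le> m \<bullet> y}" by auto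
  moreover have "convex {m. -1 \<le> m \<bullet> y}"
    using convex_halfspace_ge[of "-1" y] by (simp add: inner_commute)
  ultimately show "\<forall>m\<in>(convex hull V). -1 \<le> m \<bullet> y" by (auto dest: hull_minimal)
qed (auto intro: hull_inc)

lemma reflexive_polytope_lattice_inequalities:
  fixes \<Delta> :: "(real^'n) set"
  assumes "reflexive_polytope \<Delta>"
  obtains V where "\<forall>m\<in>V. lattice_pt m" "\<Delta> = {y. \<forall>m\<in>V. -1 \<le> m \<bullet> y}"
proof -
  obtain S where S: "finite S" "\<Delta> = convex hull S"
    using assms unfolding reflexive_polytope_def lattice_polytope_def by auto
  obtain V where V: "\<forall>m\<in>V. lattice_pt m" "dual_polytope \<Delta> = convex hull V"
    using assms unfolding reflexive_polytope_def lattice_polytope_def by auto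
  have "0 \<in> \<Delta>" using assms interior_subset unfolding reflexive_polytope_def by blast
  hence "\<Delta> = {y. \<forall>m\<in>dual_polytope \<Delta>. -1 \<le> m \<bullet> y}"
    using S by (simp add: closed_convex_bipolar compact_imp_closed compact_convex_hull finite_imp_compact)
  thus thesis using that V by (simp add: dual_constraints_convex_hull)
qed

section \<open>Cones of a \<Delta>-maximal fan\<close>

definition primitive_lattice_pt :: "real^'n \<Rightarrow> bool" where
  "primitive_lattice_pt p \<longleftrightarrow> lattice_pt p \<and> (\<forall>t. 0 < t \<and> t < 1 \<longrightarrow> \<not> lattice_pt (t *\<^sub>R p))"

text \<open>V stands for the lattice points whose convex hull is the dual polytope
  (see reflexive_polytope_lattice_inequalities).\<close>

locale reflexive_fan =
  fixes \<Delta> :: "(real^'n) set" and \<Sigma> :: "(real^'n) set set" and V :: "(real^'n) set"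
  assumes polytope_Delta: "polytope \<Delta>"
    and lattice_pt_V: "\<And>m. m \<in> V \<Longrightarrow> lattice_pt m"
    and Delta_eq: "\<Delta> = {y. \<forall>m\<in>V. -1 \<le> m \<bullet> y}"
    and Delta_maximal: "Delta_maximal \<Delta> \<Sigma>"
begin

lemma is_fan: "is_fan \<Sigma>"
  using Delta_maximal unfolding Delta_maximal_def by blast

lemma face_in_fan: "\<sigma> \<in> \<Sigma> \<Longrightarrow> \<tau> face_of \<sigma> \<Longrightarrow> \<tau> \<noteq> {} \<Longrightarrow> \<tau> \<in> \<Sigma>"
  using is_fan unfolding is_fan_def by blast

lemma fan_rays_eq: "fan_rays \<Sigma> = {cone_gen {p} | p. p \<in> \<Delta> \<and> lattice_pt p \<and> p \<noteq> 0}"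
  using Delta_maximal unfolding Delta_maximal_def by blast

lemma lattice_pt_in_cone_imp_generator_multiple:
  assumes \<sigma>: "cone_gen W \<in> \<Sigma>" "finite W"
    and p: "p \<in> \<Delta>" "lattice_pt p" "p \<noteq> 0" "p \<in> cone_gen W"
  shows "\<exists>w\<in>W. \<exists>c>0. p = c *\<^sub>R w"
proof -
  have "cone_gen {p} \<in> \<Sigma>" using fan_rays_eq p unfolding fan_rays_def by blast
  hence "(cone_gen W \<inter> cone_gen {p}) face_of cone_gen W"
    using is_fan \<sigma>(1) unfolding is_fan_def by blast
  moreover have "cone_gen W \<inter> cone_gen {p} = cone_gen {p}"
    using p(4) cone_gen_scaleR by (auto simp: cone_gen_singleton)
  ultimately show ?thesis using ray_face_of_cone_gen_imp_generator_multiple \<sigma>(2) p(3) by simp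
qed

lemma generator_ray_meets_lattice_pt:
  assumes \<sigma>: "cone_gen S \<in> \<Sigma>" and indS: "independent S" and s: "s \<in> S"
  obtains c where "0 < c" "c *\<^sub>R s \<in> \<Delta>" "lattice_pt (c *\<^sub>R s)"
proof -
  have s0: "s \<noteq> 0" using indS s dependent_zero by blast
  have "cone_gen {s} \<in> \<Sigma>"
    using face_in_fan[OF \<sigma> cone_gen_singleton_face_of[OF indS s]]
      generator_in_cone_gen[of "{s}" s] by blast
  moreover have "dim (cone_gen {s}) = 1" using dim_cone_gen[of "{s}"] s0 by simp
  ultimately have "cone_gen {s} \<in> fan_rays \<Sigma>" unfolding fan_rays_def by blast
  then obtain p where p: "cone_gen {s} = cone_gen {p}" "p \<in> \<Delta>" "lattice_pt p" "p \<noteq> 0"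
    using fan_rays_eq by auto
  have "p \<in> cone_gen {s}" using p(1) generator_in_cone_gen[of "{p}" p] by simp
  then obtain c where c: "0 \<le> c" "p = c *\<^sub>R s" unfolding cone_gen_singleton by auto
  with p(4) have "0 < c" by (cases "c = 0") auto
  thus thesis using that p(2,3) c(2) by blast
qed

lemma primitive_lattice_pt_on_ray:
  assumes "s \<noteq> 0" "0 < c" "c *\<^sub>R s \<in> \<Delta>" "lattice_pt (c *\<^sub>R s)"
  obtains k where "0 < k" "k *\<^sub>R s \<in> \<Delta>" "primitive_lattice_pt (k *\<^sub>R s)"
proof -
  define C where "C = {c. 0 < c \<and> c *\<^sub>R s \<in> \<Delta> \<and> lattice_pt (c *\<^sub>R s)}"
  obtain R where R: "\<forall>x\<in>\<Delta>. norm x \<le> R"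
    using polytope_imp_bounded[OF polytope_Delta] bounded_iff by blast
  have "(\<lambda>c. c *\<^sub>R s) ` C \<subseteq> {x. lattice_pt x \<and> norm x \<le> R}" unfolding C_def using R by auto
  hence "finite ((\<lambda>c. c *\<^sub>R s) ` C)" using finite_bounded_lattice_pts finite_subset by blast
  moreover have "inj_on (\<lambda>c. c *\<^sub>R s) C" using assms(1) by (auto simp: inj_on_def)
  ultimately have "finite C" using finite_imageD by blast
  moreover have "c \<in> C" using assms unfolding C_def by blast
  ultimately have kC: "Min C \<in> C" and k_min: "\<And>c. c \<in> C \<Longrightarrow> Min C \<le> c"
    by (auto intro: Min_in)
  define k where "k = Min C"
  \<comment> \<open>By convexity and 0 \<in> \<Delta>, a lattice point strictly between 0 and k s would lie in C.\<close>
  have "\<not> lattice_pt (t *\<^sub>R (k *\<^sub>R s))" if t: "0 < t" "t < 1" for t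
  proof
    assume l: "lattice_pt (t *\<^sub>R (k *\<^sub>R s))"
    have "(1 - t) *\<^sub>R 0 + t *\<^sub>R (k *\<^sub>R s) \<in> \<Delta>"
      using polytope_imp_convex[OF polytope_Delta] kC t unfolding C_def k_def
      by (intro convexD) (auto simp: Delta_eq)
    hence "t * k \<in> C" using l t kC unfolding C_def k_def by auto
    hence "k \<le> t * k" unfolding k_def by (rule k_min)
    moreover have "t * k < k" using t kC unfolding C_def k_def by auto
    ultimately show False by simp
  qed
  thus thesis using that kC unfolding C_def k_def primitive_lattice_pt_def by blast
qed

lemma cone_primitive_generators:
  assumes \<sigma>: "cone_gen S \<in> \<Sigma>" and indS: "independent S"
  obtains W where "independent W" "cone_gen W = cone_gen S" "W \<subseteq> \<Delta>"
    "\<forall>w\<in>W. primitive_lattice_pt w"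
proof -
  have "\<forall>s\<in>S. \<exists>k. 0 < k \<and> k *\<^sub>R s \<in> \<Delta> \<and> primitive_lattice_pt (k *\<^sub>R s)"
  proof
    fix s assume s: "s \<in> S"
    have "s \<noteq> 0" using indS s dependent_zero by blast
    moreover obtain c where "0 < c" "c *\<^sub>R s \<in> \<Delta>" "lattice_pt (c *\<^sub>R s)"
      using generator_ray_meets_lattice_pt[OF \<sigma> indS s] .
    ultimately obtain k where "0 < k" "k *\<^sub>R s \<in> \<Delta>" "primitive_lattice_pt (k *\<^sub>R s)"
      by (rule primitive_lattice_pt_on_ray)
    thus "\<exists>k. 0 < k \<and> k *\<^sub>R s \<in> \<Delta> \<and> primitive_lattice_pt (k *\<^sub>R s)" by blast
  qed
  from bchoice[OF this]
  obtain k where k: "\<forall>s\<in>S. 0 < k s \<and> k s *\<^sub>R s \<in> \<Delta> \<and> primitive_lattice_pt (k s *\<^sub>R s)"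
    by blast
  have k_pos: "\<forall>s\<in>S. 0 < k s" and k_nz: "\<forall>s\<in>S. k s \<noteq> 0" using k by auto
  show thesis
  proof (rule that)
    show "independent ((\<lambda>s. k s *\<^sub>R s) ` S)" using independent_rescale[OF indS k_nz] .
    show "cone_gen ((\<lambda>s. k s *\<^sub>R s) ` S) = cone_gen S"
      using cone_gen_rescale[OF _ k_pos] indS independent_bound by blast
    show "(\<lambda>s. k s *\<^sub>R s) ` S \<subseteq> \<Delta>" "\<forall>w\<in>(\<lambda>s. k s *\<^sub>R s) ` S. primitive_lattice_pt w"
      using k by auto
  qed
qed

lemma inner_coeff_sum_lower_bound:
  assumes "m \<in> V" "W \<subseteq> \<Delta>" "\<forall>w\<in>W. 0 \<le> b w"
  shows "- sum b W \<le> m \<bullet> (\<Sum>w\<in>W. b w *\<^sub>R w)"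
proof -
  have "(\<Sum>w\<in>W. b w * (-1)) \<le> (\<Sum>w\<in>W. b w * (m \<bullet> w))"
    using assms Delta_eq by (intro sum_mono mult_left_mono) auto
  thus ?thesis by (simp add: inner_sum_right sum_negf)
qed

lemma cone_in_facet_cone:
  assumes "finite W" "W \<noteq> {}" "W \<subseteq> \<Delta>" "m \<in> V" "\<forall>w\<in>W. m \<bullet> w = -1"
  shows "\<exists>\<tau>\<in>maximal_cones_of_face_fan \<Delta>. cone_gen W \<subseteq> \<tau>"
proof -
  define G where "G = \<Delta> \<inter> {x. (- m) \<bullet> x = 1}"
  have "G face_of \<Delta>" unfolding G_def
    using polytope_imp_convex[OF polytope_Delta] assms(4) Delta_eq
    by (intro face_of_Int_supporting_hyperplane_le) auto
  moreover have "G \<noteq> {}" using assms(2,3,5) unfolding G_def by auto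
  moreover have "0 \<in> \<Delta>" "0 \<notin> G" unfolding G_def by (simp_all add: Delta_eq)
  hence "G \<noteq> \<Delta>" by blast
  ultimately obtain F where F: "F facet_of \<Delta>" "G \<subseteq> F"
    by (rule face_of_polyhedron_subset_facet[OF polytope_imp_polyhedron[OF polytope_Delta]])
  have "W \<subseteq> F" using F assms(3,5) unfolding G_def by auto
  hence "cone_gen W \<subseteq> cone_over F"
    using assms(1,2) F(1) facet_of_imp_face_of face_of_imp_convex
    by (intro cone_gen_subset_cone_over) blast+
  thus ?thesis unfolding maximal_cones_of_face_fan_def using F(1) by blast
qed

lemma coeff_sum_lt_2_imp_in_Delta:
  assumes "W \<subseteq> \<Delta>" "\<forall>w\<in>W. 0 \<le> b w" "lattice_pt (\<Sum>w\<in>W. b w *\<^sub>R w)" "sum b W < 2"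
  shows "(\<Sum>w\<in>W. b w *\<^sub>R w) \<in> \<Delta>"
  unfolding Delta_eq
proof (intro CollectI ballI)
  fix m assume m: "m \<in> V"
  have "-2 < m \<bullet> (\<Sum>w\<in>W. b w *\<^sub>R w)"
    using inner_coeff_sum_lower_bound[OF m assms(1,2)] assms(4) by simp
  thus "-1 \<le> m \<bullet> (\<Sum>w\<in>W. b w *\<^sub>R w)"
    using Ints_gt_minus_2_imp_ge_minus_1 inner_lattice_pt_Ints[OF lattice_pt_V[OF m] assms(3)] by blast
qed

lemma coeff_sum_2_imp_supporting_dual_vertex:
  assumes W: "finite W" "W \<subseteq> \<Delta>" and b: "\<forall>w\<in>W. 0 \<le> b w" "sum b W = 2"
    and z: "lattice_pt (\<Sum>w\<in>W. b w *\<^sub>R w)" "(\<Sum>w\<in>W. b w *\<^sub>R w) \<notin> \<Delta>"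
  obtains m where "m \<in> V" "\<forall>w\<in>W. 0 < b w \<longrightarrow> m \<bullet> w = -1"
proof -
  let ?z = "\<Sum>w\<in>W. b w *\<^sub>R w"
  obtain m where m: "m \<in> V" "m \<bullet> ?z < -1" using z(2) unfolding Delta_eq by (auto simp: not_le)
  have "m \<bullet> ?z \<le> -2"
    using Ints_gt_minus_2_imp_ge_minus_1[OF inner_lattice_pt_Ints[OF lattice_pt_V[OF m(1)] z(1)]] m(2)
    by (meson not_le)
  \<comment> \<open>The slack \<open>m \<bullet> z + sum b W\<close> is a sum of nonnegative terms, so each term vanishes.\<close>
  hence "(\<Sum>w\<in>W. b w * (m \<bullet> w + 1)) \<le> 0"
    using b(2) by (simp add: distrib_left sum.distrib inner_sum_right)
  moreover have terms_nonneg: "\<forall>w\<in>W. 0 \<le> b w * (m \<bullet> w + 1)"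
  proof
    fix w assume "w \<in> W"
    hence "0 \<le> b w" "-1 \<le> m \<bullet> w" using b(1) W(2) m(1) unfolding Delta_eq by blast+
    thus "0 \<le> b w * (m \<bullet> w + 1)" by simp
  qed
  ultimately have "(\<Sum>w\<in>W. b w * (m \<bullet> w + 1)) = 0"
    by (intro order_antisym) (simp_all add: sum_nonneg)
  hence "\<forall>w\<in>W. b w * (m \<bullet> w + 1) = 0"
    using sum_nonneg_eq_0_iff[OF W(1), of "\<lambda>w. b w * (m \<bullet> w + 1)"] terms_nonneg by simp
  have "m \<bullet> w = -1" if "w \<in> W" "0 < b w" for w
  proof -
    have "m \<bullet> w + 1 = 0" using \<open>\<forall>w\<in>W. b w * (m \<bullet> w + 1) = 0\<close> that by auto
    thus ?thesis by linarith
  qed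
  thus thesis using that m(1) by blast
qed

context
  fixes W :: "(real^'n) set"
  assumes cone_in_fan: "cone_gen W \<in> \<Sigma>" and indW: "independent W" and W_Delta: "W \<subseteq> \<Delta>"
    and primitive_W: "\<forall>w\<in>W. primitive_lattice_pt w"
begin

lemma finite_generators: "finite W"
  using indW independent_bound by blast

lemma fractional_lattice_pt_notin_Delta:
  assumes b: "\<forall>w\<in>W. 0 \<le> b w \<and> b w < 1" "\<exists>w\<in>W. b w \<noteq> 0"
    and z: "lattice_pt (\<Sum>w\<in>W. b w *\<^sub>R w)"
  shows "(\<Sum>w\<in>W. b w *\<^sub>R w) \<notin> \<Delta>"
proof
  let ?z = "\<Sum>w\<in>W. b w *\<^sub>R w"
  assume "?z \<in> \<Delta>"
  have "?z \<in> cone_gen W" unfolding cone_gen_def using b(1) by auto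
  moreover have "?z \<noteq> 0"
  proof
    assume "?z = 0"
    have "b w = 0" if "w \<in> W" for w
      by (rule independent_coeffs_eq[OF indW _ that, of b "\<lambda>_. 0"]) (use \<open>?z = 0\<close> in simp)
    thus False using b(2) by blast
  qed
  ultimately obtain w0 c where w0: "w0 \<in> W" "0 < c" "?z = c *\<^sub>R w0"
    using lattice_pt_in_cone_imp_generator_multiple[OF cone_in_fan finite_generators \<open>?z \<in> \<Delta>\<close> z]
    by blast
  hence "?z = (\<Sum>w\<in>W. (if w = w0 then c else 0) *\<^sub>R w)"
    using finite_generators by (simp add: sum_single_coeff_scaleR)
  hence "b w0 = (if w0 = w0 then c else 0)" by (rule independent_coeffs_eq[OF indW _ w0(1)])
  hence "b w0 = c" by simp
  hence "lattice_pt (b w0 *\<^sub>R w0)" using w0(3) z by simp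
  moreover have "0 < b w0" "b w0 < 1" using b(1) w0(1,2) \<open>b w0 = c\<close> by auto
  ultimately show False using primitive_W w0(1) unfolding primitive_lattice_pt_def by blast
qed

lemma two_le_fractional_coeff_sum:
  assumes "\<forall>w\<in>W. 0 \<le> b w \<and> b w < 1" "\<exists>w\<in>W. b w \<noteq> 0" "lattice_pt (\<Sum>w\<in>W. b w *\<^sub>R w)"
  shows "2 \<le> sum b W"
proof (rule ccontr)
  assume "\<not> 2 \<le> sum b W"
  hence "(\<Sum>w\<in>W. b w *\<^sub>R w) \<in> \<Delta>"
    using coeff_sum_lt_2_imp_in_Delta[OF W_Delta] assms(1,3) by simp
  thus False using fractional_lattice_pt_notin_Delta[OF assms] by contradiction
qed

lemma lattice_saturated_generators:
  assumes small: "card W \<le> 3 \<or> (card W = 4 \<and> \<not> (\<exists>\<tau>\<in>maximal_cones_of_face_fan \<Delta>. cone_gen W \<subseteq> \<tau>))"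
  shows "lattice_saturated W"
  unfolding lattice_saturated_def
proof (intro allI impI, elim conjE)
  fix x assume lx: "lattice_pt x" and "x \<in> span W"
  then obtain a where a: "x = (\<Sum>w\<in>W. a w *\<^sub>R w)"
    using span_finite[OF finite_generators] by auto
  define f where "f w = a w - of_int \<lfloor>a w\<rfloor>" for w
  have f: "0 \<le> f w \<and> f w < 1" for w unfolding f_def by linarith
  have lattice_W: "\<And>w. w \<in> W \<Longrightarrow> lattice_pt w"
    using primitive_W unfolding primitive_lattice_pt_def by blast
  have "(\<Sum>w\<in>W. f w *\<^sub>R w) = x - (\<Sum>w\<in>W. of_int \<lfloor>a w\<rfloor> *\<^sub>R w)"
    unfolding a f_def by (simp add: scaleR_diff_left sum_subtractf)
  hence lf: "lattice_pt (\<Sum>w\<in>W. f w *\<^sub>R w)"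
    using lx lattice_W by (auto intro!: lattice_pt_diff lattice_pt_sum)
  \<comment> \<open>Both the fractional point and its reflection through the unit parallelepiped would have
    coefficient sum at least 2, but the two sums add up to at most card W \<le> 4.\<close>
  have "\<forall>w\<in>W. f w = 0"
  proof (rule ccontr)
    assume "\<not> ?thesis"
    then obtain w1 where w1: "w1 \<in> W" "f w1 \<noteq> 0" by blast
    define g where "g w = (if 0 < f w then 1 - f w else 0)" for w
    have g: "0 \<le> g w \<and> g w < 1" "f w + g w \<le> 1" for w
      unfolding g_def using f[of w] by auto
    have "g w *\<^sub>R w = (if 0 < f w then 1 else 0) *\<^sub>R w - f w *\<^sub>R w" for w
      unfolding g_def using f[of w] by (auto simp: algebra_simps)
    hence "(\<Sum>w\<in>W. g w *\<^sub>R w) = (\<Sum>w\<in>W. (if 0 < f w then 1 else 0) *\<^sub>R w) - (\<Sum>w\<in>W. f w *\<^sub>R w)"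
      by (simp add: sum_subtractf)
    hence lg: "lattice_pt (\<Sum>w\<in>W. g w *\<^sub>R w)"
      using lf lattice_W by (auto intro!: lattice_pt_diff lattice_pt_sum)
    have "g w1 \<noteq> 0" unfolding g_def using f[of w1] w1(2) by auto
    hence sum_f: "2 \<le> sum f W" and sum_g: "2 \<le> sum g W"
      using two_le_fractional_coeff_sum f g(1) w1 lf lg by blast+
    have "sum f W + sum g W \<le> card W"
      using sum_mono[of W "\<lambda>w. f w + g w" "\<lambda>_. 1"] g(2) by (simp add: sum.distrib)
    hence card_W: "card W = 4" and not_facet: "\<not> (\<exists>\<tau>\<in>maximal_cones_of_face_fan \<Delta>. cone_gen W \<subseteq> \<tau>)"
      using small sum_f sum_g by auto
    have "sum f W = 2" using \<open>sum f W + sum g W \<le> card W\<close> card_W sum_f sum_g by simp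
    have "(\<Sum>w\<in>W. 1 - (f w + g w)) = 0"
      using \<open>sum f W + sum g W \<le> card W\<close> card_W sum_f sum_g
      by (simp add: sum_subtractf sum.distrib)
    hence fg: "\<forall>w\<in>W. f w + g w = 1"
      using sum_nonneg_eq_0_iff[OF finite_generators, of "\<lambda>w. 1 - (f w + g w)"] g(2) by auto
    have f_pos: "0 < f w" if "w \<in> W" for w
    proof (rule ccontr)
      assume "\<not> 0 < f w"
      hence "f w + g w = f w" unfolding g_def by simp
      thus False using fg that f[of w] by simp
    qed
    have f_range: "\<forall>w\<in>W. 0 \<le> f w \<and> f w < 1" and f_nonneg: "\<forall>w\<in>W. 0 \<le> f w" using f by auto
    obtain m where m: "m \<in> V" "\<forall>w\<in>W. 0 < f w \<longrightarrow> m \<bullet> w = -1"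
      using coeff_sum_2_imp_supporting_dual_vertex[OF finite_generators W_Delta f_nonneg
          \<open>sum f W = 2\<close> lf fractional_lattice_pt_notin_Delta[OF f_range _ lf]] w1 by blast
    have "W \<noteq> {}" using card_W by auto
    thus False
      using cone_in_facet_cone[OF finite_generators _ W_Delta m(1)] f_pos m(2) not_facet by blast
  qed
  hence "x = (\<Sum>w\<in>W. of_int \<lfloor>a w\<rfloor> *\<^sub>R w)" unfolding a f_def by (simp cong: sum.cong)
  thus "x \<in> int_span W" unfolding int_span_def by (auto intro!: exI[of _ "\<lambda>w. of_int \<lfloor>a w\<rfloor>"])
qed

end

lemma simplicial_cone: "\<sigma> \<in> \<Sigma> \<Longrightarrow> \<exists>S. independent S \<and> \<sigma> = cone_gen S"
  using Delta_maximal unfolding Delta_maximal_def simplicial_fan_def by blast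

lemma unimodular_cone_if_small:
  assumes \<sigma>: "\<sigma> \<in> \<Sigma>"
    and small: "dim \<sigma> \<le> 3 \<or> (dim \<sigma> = 4 \<and> \<not> (\<exists>\<tau>\<in>maximal_cones_of_face_fan \<Delta>. \<sigma> \<subseteq> \<tau>))"
  shows "unimodular_cone \<sigma>"
proof -
  obtain S where S: "independent S" "\<sigma> = cone_gen S" using simplicial_cone[OF \<sigma>] by blast
  with \<sigma> have "cone_gen S \<in> \<Sigma>" by simp
  then obtain W where W: "independent W" "cone_gen W = cone_gen S" "W \<subseteq> \<Delta>"
      "\<forall>w\<in>W. primitive_lattice_pt w"
    by (rule cone_primitive_generators[OF _ S(1)])
  have \<sigma>_W: "\<sigma> = cone_gen W" using S(2) W(2) by simp
  have "dim \<sigma> = card W" unfolding \<sigma>_W using W(1) independent_bound dim_cone_gen by blast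
  hence "lattice_saturated W"
    using lattice_saturated_generators[OF _ W(1,3,4)] \<sigma> \<sigma>_W small by simp
  moreover have "\<forall>w\<in>W. lattice_pt w" using W(4) unfolding primitive_lattice_pt_def by blast
  ultimately obtain E where "lattice_basis E" "W \<subseteq> E"
    using lattice_saturated_imp_subset_lattice_basis W(1) by blast
  thus ?thesis unfolding unimodular_cone_def using \<sigma>_W by blast
qed

end

theorem proposition2p1:
  fixes \<Delta> :: "(real^'n) set" and \<Sigma> :: "(real^'n) set set"
  assumes "reflexive_polytope \<Delta>"
    and "Delta_maximal \<Delta> \<Sigma>"
  shows "(\<forall>\<sigma>\<in>\<Sigma>. dim \<sigma> \<le> 3 \<longrightarrow> unimodular_cone \<sigma>) \<and>
         (\<forall>\<sigma>\<in>\<Sigma>. dim \<sigma> = 4 \<and> \<not> (\<exists>\<tau>\<in>maximal_cones_of_face_fan \<Delta>. \<sigma> \<subseteq> \<tau>)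
              \<longrightarrow> unimodular_cone \<sigma>)"
proof -
  obtain V where "\<forall>m\<in>V. lattice_pt m" "\<Delta> = {y. \<forall>m\<in>V. -1 \<le> m \<bullet> y}"
    using reflexive_polytope_lattice_inequalities[OF assms(1)] .
  moreover have "polytope \<Delta>"
    using assms(1) unfolding reflexive_polytope_def lattice_polytope_def polytope_def by blast
  ultimately interpret reflexive_fan \<Delta> \<Sigma> V
    using assms(2) by unfold_locales auto
  show ?thesis using unimodular_cone_if_small by blast
qed

end
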